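(* Let $n\ge5$. On the $n$-gon graph over $\mathbb{F}_2$ with exterior algebra $\Omega_{min}=\Omega(\mathbb{Z}_n)$, the unique quantum metric $g=e^+\otimes e^-+e^-\otimes e^+$ has a unique QLC, namely $\nabla e^\pm=0$. It has $\sigma$ equal to the flip map $e^a\otimes e^b\mapsto e^b\otimes e^a$ ($a,b\in\{+,-\}$) and is flat.
   Context: $A=\mathbb{F}_2(\mathbb{Z}_n)$; $(R_\pm f)(i)=f(i\pm1)$ mod $n$. The $n$-gon graph has arrows $i\to i\pm1$ mod $n$; the calculus has basis over $A$ given by $e^+=\sum_i (i\to i+1)$, $e^-=\sum_i(i\to i-1)$, with $e^\pm f=(R_\pm f)e^\pm$ and ${\rm d} f=(R_+f+f)e^++(R_-f+f)e^-$; $\Omega^1\otimes_A\Omega^1$ is free with basis $e^a\otimes e^b$. $\Omega(\mathbb{Z}_n)$ is the exterior algebra generated by $A$ and $e^\pm$ with relations $(e^\pm)^2=0$, $e^+\wedge e^-+e^-\wedge e^+=0$, ${\rm d} e^\pm=0$. A bimodule connection is a linear $\nabla:\Omega^1\to\Omega^1\otimes_A\Omega^1$ with $\nabla(f\omega)={\rm d} f\otimes\omega+f\nabla\omega$ and $\nabla(\omega f)=(\nabla\omega)f+\sigma(\omega\otimes{\rm d} f)$ for a bimodule map $\sigma$; it is a QLC if $T_\nabla=\wedge\nabla-{\rm d}=0$ and $(\nabla\otimes\mathrm{id}+(\sigma\otimes\mathrm{id})(\mathrm{id}\otimes\nabla))g=0$. Flat means $R_\nabla=({\rm d}\otimes\mathrm{id}-(\wedge\otimes\mathrm{id})(\mathrm{id}\otimes\nabla))\nabla=0$.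 *)

theory Defs
  imports "HOL-Library.Function_Algebras" "Berlekamp_Zassenhaus.Finite_Field"
begin

text \<open>Z_n is the type 'n mod_ring with n = CARD('n); F_2 is bool mod_ring (GF(2)).
 The algebra A = F_2(Z_n) is Z_n => F_2 with pointwise operations.\<close>

type_synonym F2 = "bool mod_ring"
type_synonym 'n alg = "'n mod_ring \<Rightarrow> F2"

datatype sgn = Pl | Mi

text \<open>A 1-form  omega = sum_a (omega a) e^a  (left coefficients);
 an element of Omega^1 (x)_A Omega^1 is  sum_{a,b} (T a b) e^a (x) e^b;
 an element of Omega^2 is  c e^+ /\ e^-  (free of rank one);
 an element of Omega^2 (x)_A Omega^1 is  sum_b (X b) (e^+ /\ e^-) (x) e^b;
 an element of Omega^1 (x)_A Omega^1 (x)_A Omega^1 is sum (W a b c) e^a (x) e^b (x) e^c.\<close>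

type_synonym 'n om1 = "sgn \<Rightarrow> 'n alg"
type_synonym 'n om11 = "sgn \<Rightarrow> sgn \<Rightarrow> 'n alg"
type_synonym 'n om2 = "'n alg"
type_synonym 'n om21 = "sgn \<Rightarrow> 'n alg"
type_synonym 'n om111 = "sgn \<Rightarrow> sgn \<Rightarrow> sgn \<Rightarrow> 'n alg"

definition shift :: "sgn \<Rightarrow> 'n::nontriv mod_ring \<Rightarrow> 'n mod_ring" where
  "shift a i = (if a = Pl then i + 1 else i - 1)"

definition Rsh :: "sgn \<Rightarrow> 'n::nontriv alg \<Rightarrow> 'n alg" where
  "Rsh a f = (\<lambda>i. f (shift a i))"

definition e :: "sgn \<Rightarrow> 'n::nontriv om1" where
  "e b = (\<lambda>a. if a = b then (\<lambda>_. 1) else (\<lambda>_. 0))"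

definition d0 :: "'n::nontriv alg \<Rightarrow> 'n om1" where
  "d0 f = (\<lambda>a. Rsh a f + f)"

text \<open>bimodule structure: e^a f = (R_a f) e^a\<close>
definition lmul1 :: "'n::nontriv alg \<Rightarrow> 'n om1 \<Rightarrow> 'n om1" where
  "lmul1 f w = (\<lambda>a i. f i * w a i)"
definition rmul1 :: "'n::nontriv om1 \<Rightarrow> 'n alg \<Rightarrow> 'n om1" where
  "rmul1 w f = (\<lambda>a i. w a i * Rsh a f i)"
definition lmul11 :: "'n::nontriv alg \<Rightarrow> 'n om11 \<Rightarrow> 'n om11" where
  "lmul11 f T = (\<lambda>a b i. f i * T a b i)"
definition rmul11 :: "'n::nontriv om11 \<Rightarrow> 'n alg \<Rightarrow> 'n om11" where
  "rmul11 T f = (\<lambda>a b i. T a b i * Rsh a (Rsh b f) i)"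

definition tens :: "'n::nontriv om1 \<Rightarrow> 'n om1 \<Rightarrow> 'n om11" where
  "tens w v = (\<lambda>a b i. w a i * Rsh a (v b) i)"

text \<open>coefficient of e^+ /\ e^- in e^a /\ e^c (relations (e^a)^2 = 0, e^+e^- + e^-e^+ = 0)\<close>
definition wsign :: "sgn \<Rightarrow> sgn \<Rightarrow> F2" where
  "wsign a c = (if a = Pl \<and> c = Mi then 1 else if a = Mi \<and> c = Pl then - 1 else 0)"

definition wedge :: "'n::nontriv om11 \<Rightarrow> 'n om2" where
  "wedge T = (\<lambda>i. \<Sum>a\<in>UNIV. \<Sum>c\<in>UNIV. wsign a c * T a c i)"

text \<open>d on 1-forms: d(sum_a w_a e^a) = sum_a d w_a /\ e^a  (d e^a = 0)\<close>
definition d1 :: "'n::nontriv om1 \<Rightarrow> 'n om2" where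
  "d1 w = wedge (\<lambda>c a. d0 (w a) c)"

definition flip :: "'n::nontriv om11 \<Rightarrow> 'n om11" where
  "flip T = (\<lambda>a b. T b a)"

definition gmet :: "'n::nontriv om11" where
  "gmet = (\<lambda>a b. if a \<noteq> b then (\<lambda>_. 1) else (\<lambda>_. 0))"

definition bimodule_map :: "('n::nontriv om11 \<Rightarrow> 'n om11) \<Rightarrow> bool" where
  "bimodule_map \<sigma> \<longleftrightarrow> (\<forall>S T. \<sigma> (S + T) = \<sigma> S + \<sigma> T)
     \<and> (\<forall>f T. \<sigma> (lmul11 f T) = lmul11 f (\<sigma> T))
     \<and> (\<forall>f T. \<sigma> (rmul11 T f) = rmul11 (\<sigma> T) f)"

definition left_connection :: "('n::nontriv om1 \<Rightarrow> 'n om11) \<Rightarrow> bool" where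
  "left_connection N \<longleftrightarrow> (\<forall>w v. N (w + v) = N w + N v)
     \<and> (\<forall>f w. N (lmul1 f w) = tens (d0 f) w + lmul11 f (N w))"

definition is_sigma :: "('n::nontriv om1 \<Rightarrow> 'n om11) \<Rightarrow> ('n om11 \<Rightarrow> 'n om11) \<Rightarrow> bool" where
  "is_sigma N \<sigma> \<longleftrightarrow> bimodule_map \<sigma>
     \<and> (\<forall>w f. N (rmul1 w f) = rmul11 (N w) f + \<sigma> (tens w (d0 f)))"

definition bimodule_connection :: "('n::nontriv om1 \<Rightarrow> 'n om11) \<Rightarrow> bool" where
  "bimodule_connection N \<longleftrightarrow> left_connection N \<and> (\<exists>\<sigma>. is_sigma N \<sigma>)"

definition torsion_free :: "('n::nontriv om1 \<Rightarrow> 'n om11) \<Rightarrow> bool" where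
  "torsion_free N \<longleftrightarrow> (\<forall>w. wedge (N w) - d1 w = 0)"

text \<open>(nabla (x) id + (sigma (x) id)(id (x) nabla)) T, computed on the representative
 T = sum_b eta_b (x) e^b with eta_b = sum_a (T a b) e^a:
 sum_b  nabla eta_b (x) e^b + (sigma (x) id)(eta_b (x) nabla e^b).\<close>
definition metric_deriv :: "('n::nontriv om1 \<Rightarrow> 'n om11) \<Rightarrow> ('n om11 \<Rightarrow> 'n om11) \<Rightarrow> 'n om11 \<Rightarrow> 'n om111" where
  "metric_deriv N \<sigma> T = (\<lambda>x y z. N (\<lambda>a. T a z) x y
     + (\<Sum>b\<in>UNIV. \<sigma> (\<lambda>a c i. T a b i * Rsh a (N (e b) c z) i) x y))"

definition QLC :: "('n::nontriv om1 \<Rightarrow> 'n om11) \<Rightarrow> bool" where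
  "QLC N \<longleftrightarrow> left_connection N \<and> torsion_free N
     \<and> (\<exists>\<sigma>. is_sigma N \<sigma> \<and> metric_deriv N \<sigma> gmet = 0)"

text \<open>(wedge (x) id)(eta (x)_A S) for eta a 1-form and S in Omega^1 (x) Omega^1\<close>
definition wedge12 :: "'n::nontriv om1 \<Rightarrow> 'n om11 \<Rightarrow> 'n om21" where
  "wedge12 v S = (\<lambda>z i. \<Sum>a\<in>UNIV. \<Sum>c\<in>UNIV. wsign a c * v a i * Rsh a (S c z) i)"

text \<open>R_nabla w = (d (x) id - (wedge (x) id)(id (x) nabla)) nabla w, computed on the representative
 nabla w = sum_b eta_b (x) e^b:  sum_b  d eta_b (x) e^b - (wedge (x) id)(eta_b (x) nabla e^b).\<close>
definition curvature :: "('n::nontriv om1 \<Rightarrow> 'n om11) \<Rightarrow> 'n om1 \<Rightarrow> 'n om21" where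
  "curvature N w = (\<lambda>z. d1 (\<lambda>a. N w a z) - (\<Sum>b\<in>UNIV. wedge12 (\<lambda>a. N w a b) (N (e b)) z))"

definition flat :: "('n::nontriv om1 \<Rightarrow> 'n om11) \<Rightarrow> bool" where
  "flat N \<longleftrightarrow> (\<forall>w. curvature N w = 0)"

end

theory Submission
  imports Defs
begin

(* A left connection is determined by its Christoffel symbols \<nabla>e^a, and its
   generalised braiding \<sigma> by the right Leibniz rule: testing that rule on a
   delta function supported at i + a + c computes \<sigma>(e^a \<otimes> e^c) in terms of
   \<nabla>e^a, because for n \<ge> 5 the points i, i \<plusminus> 1, i \<plusminus> 2 are pairwise distinct.
   The same test shows that the diagonal components (\<nabla>e^a)_{uu} with u \<noteq> a
   vanish, and torsion freeness makes \<nabla>e^a symmetric. The (u,u,v) component of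
   metric compatibility reads
     (\<nabla>e^u)_{uu}(i) + (\<nabla>e^v)_{uv}(i+u) (1 + (\<nabla>e^u)_{uu}(i)) = 0,
   which over F_2 forces both symbols to vanish. Hence \<nabla>e^\<plusminus> = 0, \<sigma> is the
   flip, and the curvature vanishes because d e^\<plusminus> = 0. *)

lemma F2_two_eq_0 [simp]: "(2::F2) = 0"
  using of_nat_CHAR[where 'a=F2] by simp

lemma F2_add_self [simp]: "(x::F2) + x = 0"
  by (metis F2_two_eq_0 mult_2 mult_zero_left)

lemma F2_add_left_cancel [simp]: "(x::F2) + (x + y) = y"
  by (simp flip: add.assoc)

lemma F2_eq_0_or_1: "(x::F2) = 0 \<or> x = 1"
proof -
  have "{0, 1} = (UNIV :: F2 set)"
    by (rule card_seteq) auto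
  then show ?thesis
    by auto
qed

lemma F2_add_eq_iff: "(x::F2) + y = z \<longleftrightarrow> y = x + z"
  by (metis F2_add_left_cancel)

lemma of_nat_mod_ring_neq_0:
  assumes "0 < k" "k < CARD('n::nontriv)"
  shows "(of_nat k :: 'n mod_ring) \<noteq> 0"
  using assms by (auto simp: of_nat_eq_0_iff_char_dvd dest: nat_dvd_not_less)

lemma shift_shift_comm: "shift a (shift b i) = shift b (shift a i)"
  by (cases a; cases b) (simp_all add: shift_def algebra_simps)

lemma shift_shift_cancel: "a \<noteq> b \<Longrightarrow> shift a (shift b i) = i"
  by (cases a; cases b) (simp_all add: shift_def)

lemma shift_shift_neq_shift:
  fixes i :: "'n::nontriv mod_ring"
  assumes "CARD('n) \<ge> 4"
  shows "shift a (shift b i) \<noteq> shift c i"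
  using of_nat_mod_ring_neq_0[of 3, where 'n='n] of_nat_mod_ring_neq_0[of 2, where 'n='n] assms
  by (cases a; cases b; cases c)
    (auto simp: shift_def algebra_simps eq_iff_diff_eq_0[of "i + _"] eq_iff_diff_eq_0[of "i - _"])

lemma shift_shift_eq_shift_shift_iff:
  fixes i :: "'n::nontriv mod_ring"
  assumes "CARD('n) \<ge> 5"
  shows "shift a (shift b i) = shift c (shift d i) \<longleftrightarrow> (a = c \<and> b = d) \<or> (a = d \<and> b = c)"
  using of_nat_mod_ring_neq_0[of 4, where 'n='n] of_nat_mod_ring_neq_0[of 2, where 'n='n] assms
  by (cases a; cases b; cases c; cases d)
    (auto simp: shift_def algebra_simps eq_iff_diff_eq_0[of "i + _"] eq_iff_diff_eq_0[of "i - _"])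

lemma UNIV_sgn: "UNIV = {Pl, Mi}"
  using sgn.exhaust by auto

lemma sum_UNIV_sgn [simp]: "(\<Sum>a\<in>UNIV. f a) = f Pl + f Mi"
  by (simp add: UNIV_sgn)

definition trivial_connection :: "'n::nontriv om1 \<Rightarrow> 'n om11" where
  "trivial_connection w = (\<lambda>c d. d0 (w d) c)"

lemma left_connection_expand:
  assumes "left_connection N"
  shows "N w c d i = trivial_connection w c d i + (\<Sum>a\<in>UNIV. w a i * N (e a) c d i)"
proof -
  have w: "w = lmul1 (w Pl) (e Pl) + lmul1 (w Mi) (e Mi)" (is "_ = ?rhs")
  proof (intro ext)
    fix a j
    show "w a j = ?rhs a j"
      by (cases a) (simp_all add: lmul1_def e_def)
  qed
  have "N w = N (lmul1 (w Pl) (e Pl)) + N (lmul1 (w Mi) (e Mi))"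
    using assms w unfolding left_connection_def by metis
  also have "\<dots> = tens (d0 (w Pl)) (e Pl) + lmul11 (w Pl) (N (e Pl))
       + (tens (d0 (w Mi)) (e Mi) + lmul11 (w Mi) (N (e Mi)))"
    using assms unfolding left_connection_def by simp
  finally show ?thesis
    by (cases d) (simp_all add: trivial_connection_def tens_def e_def Rsh_def lmul11_def)
qed

lemma tens_e_e: "tens (e a) (e b) = (\<lambda>a' b' _. if a' = a \<and> b' = b then 1 else 0)"
  by (simp add: fun_eq_iff tens_def e_def Rsh_def)

lemma bimodule_map_expand:
  assumes "bimodule_map \<sigma>"
  shows "\<sigma> T x y i = (\<Sum>a\<in>UNIV. \<Sum>b\<in>UNIV. T a b i * \<sigma> (tens (e a) (e b)) x y i)"
proof -
  have T: "T = lmul11 (T Pl Pl) (tens (e Pl) (e Pl)) + lmul11 (T Pl Mi) (tens (e Pl) (e Mi))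
     + lmul11 (T Mi Pl) (tens (e Mi) (e Pl)) + lmul11 (T Mi Mi) (tens (e Mi) (e Mi))" (is "_ = ?rhs")
  proof (intro ext)
    fix a b j
    show "T a b j = ?rhs a b j"
      by (cases a; cases b) (simp_all add: lmul11_def tens_e_e)
  qed
  have "\<sigma> T = lmul11 (T Pl Pl) (\<sigma> (tens (e Pl) (e Pl))) + lmul11 (T Pl Mi) (\<sigma> (tens (e Pl) (e Mi)))
     + lmul11 (T Mi Pl) (\<sigma> (tens (e Mi) (e Pl))) + lmul11 (T Mi Mi) (\<sigma> (tens (e Mi) (e Mi)))"
    using assms unfolding bimodule_map_def by (subst T) simp
  then show ?thesis by (simp add: lmul11_def add.assoc)
qed

(* The (c, d) component at i of  \<nabla>(e^a f) = (\<nabla>e^a) f + \<sigma>(e^a \<otimes> df). *)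
lemma right_leibniz_expand:
  assumes "left_connection N" and "is_sigma N \<sigma>"
  shows "(if a = d then f (shift d (shift c i)) + f (shift d i) else 0) + f (shift a i) * N (e a) c d i
    = N (e a) c d i * f (shift d (shift c i))
      + (\<Sum>b\<in>UNIV. (f (shift b (shift a i)) + f (shift a i)) * \<sigma> (tens (e a) (e b)) c d i)"
proof -
  have "bimodule_map \<sigma>"
    using assms(2) unfolding is_sigma_def by simp
  moreover have "N (rmul1 (e a) f) c d i = rmul11 (N (e a)) f c d i + \<sigma> (tens (e a) (d0 f)) c d i"
    using assms(2) unfolding is_sigma_def by simp
  ultimately show ?thesis
    unfolding left_connection_expand[OF assms(1), of "rmul1 (e a) f"]
      bimodule_map_expand[OF \<open>bimodule_map \<sigma>\<close>, of "tens (e a) (d0 f)"]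
    by (cases a; cases d)
      (simp_all add: trivial_connection_def rmul1_def rmul11_def e_def tens_def d0_def Rsh_def
        algebra_simps shift_shift_comm)
qed

lemma is_sigma_tens_e_e:
  fixes N :: "'n::nontriv om1 \<Rightarrow> 'n om11"
  assumes "CARD('n) \<ge> 5" and "left_connection N" and "is_sigma N \<sigma>"
  shows "\<sigma> (tens (e a) (e c)) x y i =
    (if (x = a \<and> y = c) \<or> (x = c \<and> y = a) then (if y = a then 1 else 0) + N (e a) x y i else 0)"
proof -
  define \<delta> :: "'n alg" where "\<delta> = (\<lambda>j. if j = shift c (shift a i) then 1 else 0)"
  have "(if a = y then \<delta> (shift y (shift x i)) + \<delta> (shift y i) else 0) + \<delta> (shift a i) * N (e a) x y i
    = N (e a) x y i * \<delta> (shift y (shift x i))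
      + (\<Sum>b\<in>UNIV. (\<delta> (shift b (shift a i)) + \<delta> (shift a i)) * \<sigma> (tens (e a) (e b)) x y i)"
    by (rule right_leibniz_expand[OF assms(2,3)])
  then show ?thesis
    using assms(1) by (cases a; cases c; cases x; cases y)
      (simp_all add: \<delta>_def shift_shift_neq_shift shift_shift_neq_shift[THEN not_sym]
        shift_shift_eq_shift_shift_iff F2_add_eq_iff)
qed

lemma christoffel_diag_eq_0:
  fixes N :: "'n::nontriv om1 \<Rightarrow> 'n om11"
  assumes "CARD('n) \<ge> 5" and "left_connection N" and "is_sigma N \<sigma>" and "a \<noteq> u"
  shows "N (e a) u u i = 0"
proof -
  define \<delta> :: "'n alg" where "\<delta> = (\<lambda>j. if j = shift a i then 1 else 0)"
  have "(if a = u then \<delta> (shift u (shift u i)) + \<delta> (shift u i) else 0) + \<delta> (shift a i) * N (e a) u u i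
    = N (e a) u u i * \<delta> (shift u (shift u i))
      + (\<Sum>b\<in>UNIV. (\<delta> (shift b (shift a i)) + \<delta> (shift a i)) * \<sigma> (tens (e a) (e b)) u u i)"
    by (rule right_leibniz_expand[OF assms(2,3)])
  then show ?thesis
    using assms by (cases a; cases u)
      (simp_all add: \<delta>_def shift_shift_neq_shift is_sigma_tens_e_e[OF assms(1-3)])
qed

lemma torsion_free_christoffel_symmetric:
  assumes "torsion_free N"
  shows "N (e a) c d i = N (e a) d c i"
proof -
  have "wedge (N (e a)) i = d1 (e a) i"
    using assms unfolding torsion_free_def by (metis diff_eq_diff_eq diff_self)
  then have "N (e a) Pl Mi i = N (e a) Mi Pl i"
    by (cases a) (simp_all add: wedge_def d1_def wsign_def e_def d0_def Rsh_def F2_add_eq_iff)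
  then show ?thesis
    by (cases c; cases d) simp_all
qed

lemma is_sigma_apply:
  fixes N :: "'n::nontriv om1 \<Rightarrow> 'n om11"
  assumes "CARD('n) \<ge> 5" and "left_connection N" and "is_sigma N \<sigma>"
  shows "\<sigma> T x y i = (if x = y then T x x i * (1 + N (e x) x x i)
                       else T y x i * (1 + N (e y) x y i) + T x y i * N (e x) x y i)"
proof -
  have "bimodule_map \<sigma>"
    using assms(3) unfolding is_sigma_def by simp
  then show ?thesis
    unfolding bimodule_map_expand[OF \<open>bimodule_map \<sigma>\<close>, of T] is_sigma_tens_e_e[OF assms]
    by (cases x; cases y) (simp_all add: algebra_simps)
qed

lemma metric_deriv_gmet_diag:
  fixes N :: "'n::nontriv om1 \<Rightarrow> 'n om11"
  assumes "CARD('n) \<ge> 5" and "left_connection N" and "is_sigma N \<sigma>" and "u \<noteq> v"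
  shows "metric_deriv N \<sigma> gmet u u v i
    = N (e u) u u i + N (e v) u v (shift u i) * (1 + N (e u) u u i)"
proof -
  have gmet_column: "(\<lambda>a. gmet a v) = e u"
  proof (rule ext)
    fix a
    show "gmet a v = e u a"
      using assms(4) by (cases a; cases u; cases v) (simp_all add: gmet_def e_def)
  qed
  then show ?thesis
    using assms(4) unfolding metric_deriv_def gmet_column is_sigma_apply[OF assms(1-3)]
    by (cases u; cases v) (simp_all add: gmet_def Rsh_def)
qed

lemma QLC_christoffel_eq_0:
  fixes N :: "'n::nontriv om1 \<Rightarrow> 'n om11"
  assumes card: "CARD('n) \<ge> 5" and "QLC N"
  shows "N (e a) = 0"
proof -
  obtain \<sigma> where lc: "left_connection N" and tf: "torsion_free N"
    and sig: "is_sigma N \<sigma>" and metric: "metric_deriv N \<sigma> gmet = 0"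
    using assms(2) unfolding QLC_def by blast
  have compat: "N (e u) u u i + N (e v) u v (shift u i) * (1 + N (e u) u u i) = 0"
    if "u \<noteq> v" for u v i
    using metric_deriv_gmet_diag[OF card lc sig that, of i] metric by (simp add: fun_eq_iff)
  have diag: "N (e u) u u i = 0" for u i
  proof -
    obtain v where "u \<noteq> v" by (cases u) auto
    from compat[OF this, of i] show ?thesis
      using F2_eq_0_or_1[of "N (e u) u u i"] by auto
  qed
  have mixed: "N (e v) u v j = 0" if "u \<noteq> v" for u v j
    using compat[OF that, of "shift v j"] that card by (simp add: diag shift_shift_cancel)
  have "N (e a) c d i = 0" for c d i
  proof (cases "c = d")
    case True
    then show ?thesis
      using diag christoffel_diag_eq_0[OF card lc sig] by (cases "a = c") auto
  next
    case False
    then have "d = a \<or> c = a"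
      by (cases a; cases c; cases d) auto
    then show ?thesis
      using mixed[OF False] mixed[OF False[symmetric]] torsion_free_christoffel_symmetric[OF tf]
      by auto
  qed
  then show ?thesis
    by (simp add: fun_eq_iff)
qed

lemma QLC_eq_trivial_connection:
  fixes N :: "'n::nontriv om1 \<Rightarrow> 'n om11"
  assumes "CARD('n) \<ge> 5" and "QLC N"
  shows "N = trivial_connection"
proof -
  have "left_connection N"
    using assms(2) unfolding QLC_def by simp
  then show ?thesis
    by (intro ext) (simp add: left_connection_expand[OF \<open>left_connection N\<close>] QLC_christoffel_eq_0[OF assms])
qed

lemma trivial_connection_e: "trivial_connection (e b) = 0"
  by (simp add: trivial_connection_def e_def d0_def Rsh_def fun_eq_iff)

lemma left_connection_trivial_connection: "left_connection trivial_connection"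
  unfolding left_connection_def
  by (simp add: trivial_connection_def d0_def Rsh_def fun_eq_iff tens_def lmul1_def lmul11_def
      algebra_simps)

lemma is_sigma_trivial_connection_flip: "is_sigma trivial_connection flip"
proof -
  have "bimodule_map flip"
    unfolding bimodule_map_def
    by (simp add: flip_def fun_eq_iff lmul11_def rmul11_def Rsh_def shift_shift_comm)
  then show ?thesis
    unfolding is_sigma_def
    by (simp add: trivial_connection_def flip_def fun_eq_iff rmul1_def rmul11_def tens_def d0_def Rsh_def
        shift_shift_comm algebra_simps)
qed

lemma is_sigma_trivial_connection_iff:
  assumes "CARD('n::nontriv) \<ge> 5"
  shows "is_sigma (trivial_connection :: 'n om1 \<Rightarrow> 'n om11) \<sigma> \<longleftrightarrow> \<sigma> = flip"
proof
  assume "is_sigma trivial_connection \<sigma>"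
  from is_sigma_apply[OF assms left_connection_trivial_connection this] show "\<sigma> = flip"
    by (intro ext) (simp add: trivial_connection_e flip_def)
qed (simp add: is_sigma_trivial_connection_flip)

lemma QLC_trivial_connection: "QLC trivial_connection"
proof -
  have "torsion_free trivial_connection"
    unfolding torsion_free_def by (simp add: trivial_connection_def d1_def)
  moreover have "metric_deriv trivial_connection flip gmet = 0"
    by (simp add: metric_deriv_def trivial_connection_e trivial_connection_def gmet_def d0_def Rsh_def
        flip_def e_def fun_eq_iff)
  ultimately show ?thesis
    unfolding QLC_def using left_connection_trivial_connection is_sigma_trivial_connection_flip by blast
qed

lemma flat_trivial_connection: "flat trivial_connection"
  unfolding flat_def curvature_def trivial_connection_e
  by (simp add: fun_eq_iff wedge12_def d1_def wedge_def wsign_def trivial_connection_def d0_def Rsh_def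
      shift_def algebra_simps)

theorem proposition4p8:
  fixes n :: nat
  assumes "n = CARD('n::nontriv)" and "n \<ge> 5"
  shows "(\<exists>!N :: 'n om1 \<Rightarrow> 'n om11. QLC N)
    \<and> (\<forall>N :: 'n om1 \<Rightarrow> 'n om11. QLC N \<longrightarrow>
          N (e Pl) = 0 \<and> N (e Mi) = 0
        \<and> bimodule_connection N
        \<and> (\<forall>\<sigma>. is_sigma N \<sigma> \<longleftrightarrow> \<sigma> = flip)
        \<and> flat N)"
proof -
  have card: "CARD('n) \<ge> 5"
    using assms by simp
  have QLC_iff: "QLC N \<longleftrightarrow> N = trivial_connection" for N :: "'n om1 \<Rightarrow> 'n om11"
    using QLC_trivial_connection QLC_eq_trivial_connection[OF card] by blast
  have "bimodule_connection (trivial_connection :: 'n om1 \<Rightarrow> 'n om11)"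
    unfolding bimodule_connection_def
    using left_connection_trivial_connection is_sigma_trivial_connection_flip by blast
  then show ?thesis
    using QLC_iff trivial_connection_e is_sigma_trivial_connection_iff[OF card] flat_trivial_connection
    by auto
qed

end
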